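(* Let $T$ be a complete theory with monster model $\mathcal{U}$, $A\subseteq\mathcal{U}$ small, $\mu\in\mathfrak{M}_x(\mathcal{U})$, $\nu\in\mathfrak{M}_y(\mathcal{U})$, and $\varphi(y)\in\mathcal{L}_y(A)$ with $0<\nu(\varphi(y))<1$. Suppose $\mu\geq_{\mathbb{E},A}\nu$ and this is witnessed by some $\lambda\in\mathfrak{M}^{\mathrm{Am}}_{xy}(A)$. Then $\mu\geq_{\mathbb{E},A}\nu_{[\varphi]}$.
   Context: For $B\subseteq\mathcal{U}$, $\mathcal{L}_x(B)$ is the Boolean algebra of formulas in $x$ with parameters from $B$ modulo $T$, embedded in $\mathcal{L}_{xy}(B)$ via $\varphi(x)\mapsto\varphi(x)\wedge y=y$; $\mathfrak{M}_x(B)$ is the set of finitely additive probability measures on $\mathcal{L}_x(B)$. For $\omega\in\mathfrak{M}_{xy}(B)$, $\pi_x(\omega)(\varphi(x))=\omega(\varphi(x)\wedge y=y)$ (similarly $\pi_y$); $\omega|_C$ is restriction. $\mu\geq_{\mathbb{E},A}\nu$ witnessed by $\lambda\in\mathfrak{M}_{xy}(A)$ means $\pi_x(\lambda)=\mu|_A$ and every $\omega\in\mathfrak{M}_{xy}(\mathcal{U})$ with $\omega|_A=\lambda$, $\pi_x(\omega)=\mu$ satisfies $\pi_y(\omega)=\nu$. $\mathfrak{M}^{\mathrm{Am}}_{xy}(A)$ is the set of separated amalgams: $\lambda\in\mathfrak{M}_{xy}(A)$ with $\lambda(\varphi(x)\wedge\psi(y))=\pi_x(\lambda)(\varphi(x))\cdot\pi_y(\lambda)(\psi(y))$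 for all $\varphi(x)\in\mathcal{L}_x(A)$, $\psi(y)\in\mathcal{L}_y(A)$. The localization $\nu_{[\varphi]}\in\mathfrak{M}_y(\mathcal{U})$ is $\nu_{[\varphi]}(\psi(y))=\nu(\varphi(y)\wedge\psi(y))/\nu(\varphi(y))$. *)

theory Defs
  imports Complex_Main
begin

text \<open>Terms: variables (indexed by nat) or parameters (elements of the monster model,
  whose universe is the whole type 'u).\<close>
datatype 'u trm = Var nat | Par 'u

datatype ('r, 'u) fm =
    Eq "'u trm" "'u trm"
  | Rel 'r "'u trm list"
  | Neg "('r, 'u) fm"
  | Conj "('r, 'u) fm" "('r, 'u) fm"
  | Ex nat "('r, 'u) fm"

fun teval :: "(nat \<Rightarrow> 'u) \<Rightarrow> 'u trm \<Rightarrow> 'u" where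
  "teval e (Var i) = e i"
| "teval e (Par a) = a"

fun sat :: "('r \<Rightarrow> 'u list \<Rightarrow> bool) \<Rightarrow> (nat \<Rightarrow> 'u) \<Rightarrow> ('r, 'u) fm \<Rightarrow> bool" where
  "sat I e (Eq s t) = (teval e s = teval e t)"
| "sat I e (Rel r ts) = I r (map (teval e) ts)"
| "sat I e (Neg \<phi>) = (\<not> sat I e \<phi>)"
| "sat I e (Conj \<phi> \<psi>) = (sat I e \<phi> \<and> sat I e \<psi>)"
| "sat I e (Ex i \<phi>) = (\<exists>a. sat I (e(i := a)) \<phi>)"

fun tparams :: "'u trm \<Rightarrow> 'u set" where
  "tparams (Var i) = {}"
| "tparams (Par a) = {a}"

fun tfv :: "'u trm \<Rightarrow> nat set" where
  "tfv (Var i) = {i}"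
| "tfv (Par a) = {}"

fun params :: "('r, 'u) fm \<Rightarrow> 'u set" where
  "params (Eq s t) = tparams s \<union> tparams t"
| "params (Rel r ts) = \<Union> (set (map tparams ts))"
| "params (Neg \<phi>) = params \<phi>"
| "params (Conj \<phi> \<psi>) = params \<phi> \<union> params \<psi>"
| "params (Ex i \<phi>) = params \<phi>"

fun fv :: "('r, 'u) fm \<Rightarrow> nat set" where
  "fv (Eq s t) = tfv s \<union> tfv t"
| "fv (Rel r ts) = \<Union> (set (map tfv ts))"
| "fv (Neg \<phi>) = fv \<phi>"
| "fv (Conj \<phi> \<psi>) = fv \<phi> \<union> fv \<psi>"
| "fv (Ex i \<phi>) = fv \<phi> - {i}"

fun tmap :: "('u \<Rightarrow> 'u) \<Rightarrow> 'u trm \<Rightarrow> 'u trm" where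
  "tmap f (Var i) = Var i"
| "tmap f (Par a) = Par (f a)"

fun pmap :: "('u \<Rightarrow> 'u) \<Rightarrow> ('r, 'u) fm \<Rightarrow> ('r, 'u) fm" where
  "pmap f (Eq s t) = Eq (tmap f s) (tmap f t)"
| "pmap f (Rel r ts) = Rel r (map (tmap f) ts)"
| "pmap f (Neg \<phi>) = Neg (pmap f \<phi>)"
| "pmap f (Conj \<phi> \<psi>) = Conj (pmap f \<phi>) (pmap f \<psi>)"
| "pmap f (Ex i \<phi>) = Ex i (pmap f \<phi>)"

text \<open>The monster model is the structure with universe UNIV::'u and interpretation I.
  Small = cardinality strictly below that of the monster.\<close>
definition small :: "'u set \<Rightarrow> bool" where
  "small B \<longleftrightarrow> (card_of B, card_of (UNIV :: 'u set)) \<in> ordLess"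

definition saturated :: "('r \<Rightarrow> 'u list \<Rightarrow> bool) \<Rightarrow> bool" where
  "saturated I \<longleftrightarrow> (\<forall>(B :: 'u set) (n :: nat) (p :: ('r, 'u) fm set).
     small B \<and> (\<forall>\<phi>\<in>p. params \<phi> \<subseteq> B \<and> fv \<phi> \<subseteq> {..<n})
     \<and> (\<forall>F\<subseteq>p. finite F \<longrightarrow> (\<exists>e. \<forall>\<phi>\<in>F. sat I e \<phi>))
     \<longrightarrow> (\<exists>e. \<forall>\<phi>\<in>p. sat I e \<phi>))"

definition strongly_homogeneous :: "('r \<Rightarrow> 'u list \<Rightarrow> bool) \<Rightarrow> bool" where
  "strongly_homogeneous I \<longleftrightarrow> (\<forall>(D :: 'u set) (f :: 'u \<Rightarrow> 'u).
     small D \<and> (\<forall>\<phi> :: ('r, 'u) fm. params \<phi> \<subseteq> D \<and> fv \<phi> = {} \<longrightarrow>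
                    (\<forall>e. sat I e \<phi> \<longleftrightarrow> sat I e (pmap f \<phi>)))
     \<longrightarrow> (\<exists>\<sigma>. bij \<sigma> \<and> (\<forall>r vs. I r (map \<sigma> vs) = I r vs) \<and> (\<forall>d\<in>D. \<sigma> d = f d)))"

definition monster :: "('r \<Rightarrow> 'u list \<Rightarrow> bool) \<Rightarrow> bool" where
  "monster I \<longleftrightarrow> saturated I \<and> strongly_homogeneous I"

text \<open>An n-tuple of variables x = (x_0,...,x_{n-1}); formulas modulo T with parameters
  from B are identified with the subsets of U^n they define (lists of length n).\<close>
definition tuples :: "nat \<Rightarrow> 'u list set" where
  "tuples n = {v. length v = n}"

definition Def :: "('r \<Rightarrow> 'u list \<Rightarrow> bool) \<Rightarrow> 'u set \<Rightarrow> nat \<Rightarrow> 'u list set set" where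
  "Def I B n = {{v. length v = n \<and> sat I (\<lambda>i. v ! i) \<phi>} | \<phi> :: ('r, 'u) fm.
                 params \<phi> \<subseteq> B \<and> fv \<phi> \<subseteq> {..<n}}"

text \<open>Finitely additive probability measure on L_n(B) (values outside Def I B n irrelevant).\<close>
definition is_measure :: "('r \<Rightarrow> 'u list \<Rightarrow> bool) \<Rightarrow> 'u set \<Rightarrow> nat \<Rightarrow> ('u list set \<Rightarrow> real) \<Rightarrow> bool" where
  "is_measure I B n m \<longleftrightarrow> m (tuples n) = 1 \<and> (\<forall>X\<in>Def I B n. 0 \<le> m X)
     \<and> (\<forall>X\<in>Def I B n. \<forall>Y\<in>Def I B n. X \<inter> Y = {} \<longrightarrow> m (X \<union> Y) = m X + m Y)"

definition prodset :: "'u list set \<Rightarrow> 'u list set \<Rightarrow> 'u list set" where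
  "prodset X Y = {v @ w | v w. v \<in> X \<and> w \<in> Y}"

definition pix :: "nat \<Rightarrow> ('u list set \<Rightarrow> real) \<Rightarrow> 'u list set \<Rightarrow> real" where
  "pix m \<omega> X = \<omega> (prodset X (tuples m))"

definition piy :: "nat \<Rightarrow> ('u list set \<Rightarrow> real) \<Rightarrow> 'u list set \<Rightarrow> real" where
  "piy n \<omega> Y = \<omega> (prodset (tuples n) Y)"

definition localize :: "('u list set \<Rightarrow> real) \<Rightarrow> 'u list set \<Rightarrow> 'u list set \<Rightarrow> real" where
  "localize \<nu> \<Phi> Y = \<nu> (\<Phi> \<inter> Y) / \<nu> \<Phi>"

text \<open>lambda witnesses mu >=_{E,A} nu (x has length n, y has length m).\<close>
definition E_witness :: "('r \<Rightarrow> 'u list \<Rightarrow> bool) \<Rightarrow> 'u set \<Rightarrow> nat \<Rightarrow> nat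
    \<Rightarrow> ('u list set \<Rightarrow> real) \<Rightarrow> ('u list set \<Rightarrow> real) \<Rightarrow> ('u list set \<Rightarrow> real) \<Rightarrow> bool" where
  "E_witness I A n m \<mu> \<nu> lam \<longleftrightarrow> is_measure I A (n + m) lam
     \<and> (\<forall>X\<in>Def I A n. pix m lam X = \<mu> X)
     \<and> (\<forall>\<omega>. is_measure I UNIV (n + m) \<omega>
            \<and> (\<forall>Z\<in>Def I A (n + m). \<omega> Z = lam Z)
            \<and> (\<forall>X\<in>Def I UNIV n. pix m \<omega> X = \<mu> X)
          \<longrightarrow> (\<forall>Y\<in>Def I UNIV m. piy n \<omega> Y = \<nu> Y))"

definition E_ge :: "('r \<Rightarrow> 'u list \<Rightarrow> bool) \<Rightarrow> 'u set \<Rightarrow> nat \<Rightarrow> nat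
    \<Rightarrow> ('u list set \<Rightarrow> real) \<Rightarrow> ('u list set \<Rightarrow> real) \<Rightarrow> bool" where
  "E_ge I A n m \<mu> \<nu> \<longleftrightarrow> (\<exists>lam. E_witness I A n m \<mu> \<nu> lam)"

definition amalgam :: "('r \<Rightarrow> 'u list \<Rightarrow> bool) \<Rightarrow> 'u set \<Rightarrow> nat \<Rightarrow> nat
    \<Rightarrow> ('u list set \<Rightarrow> real) \<Rightarrow> bool" where
  "amalgam I A n m lam \<longleftrightarrow> is_measure I A (n + m) lam
     \<and> (\<forall>X\<in>Def I A n. \<forall>Y\<in>Def I A m. lam (prodset X Y) = pix m lam X * piy n lam Y)"

end

theory Submission
  imports Defs "HOL-Analysis.Analysis"
begin

(* Let S be the cylinder over \<Phi> in the y-variables and p = lam S. Every lift of lam (an extension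
   to all definable sets with x-marginal \<mu>) has y-marginal \<nu>, and lifts exist, so p = \<nu> \<Phi>.
   Because lam is a separated amalgam, its localizations at S and at the complement of S still
   have x-marginal \<mu>. Mixing a lift \<omega> of the localization at S with any lift R of the
   localization at the complement gives p \<omega> + (1 - p) R, a lift of lam, whose y-marginal is
   therefore \<nu>. Since \<omega> is concentrated on S and R vanishes on S, evaluating at the cylinder
   over \<Phi> \<inter> Y yields \<nu> (\<Phi> \<inter> Y) = p \<omega> (cylinder over Y).

   Lifts exist by compactness of [0,1]^(sets): finitely many constraints are met by a finite
   convex combination of point masses, placed in the atoms generated by the constraints and by
   the projections of those atoms; this uses that projections of A-definable sets are
   A-definable. *)

section \<open>Formulas and definable sets\<close>

lemma teval_cong: "\<forall>i\<in>tfv t. e i = e' i \<Longrightarrow> teval e t = teval e' t"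
  by (cases t) auto

lemma sat_cong: "\<forall>i\<in>fv \<phi>. e i = e' i \<Longrightarrow> sat I e \<phi> = sat I e' \<phi>"
proof (induction \<phi> arbitrary: e e')
  case (Eq s t)
  then have "teval e s = teval e' s" "teval e t = teval e' t"
    by (auto intro: teval_cong)
  then show ?case by simp
next
  case (Rel r ts)
  then have "map (teval e) ts = map (teval e') ts"
    by (auto intro!: teval_cong)
  then show ?case by (simp only: sat.simps)
next
  case (Ex i \<phi>)
  then have "sat I (e(i := a)) \<phi> = sat I (e'(i := a)) \<phi>" for a
    by auto
  then show ?case by simp
next
  case (Conj \<phi>\<^sub>1 \<phi>\<^sub>2)
  then have "sat I e \<phi>\<^sub>1 = sat I e' \<phi>\<^sub>1" "sat I e \<phi>\<^sub>2 = sat I e' \<phi>\<^sub>2"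
    by auto
  then show ?case by simp
qed simp

fun tshift :: "nat \<Rightarrow> 'u trm \<Rightarrow> 'u trm" where
  "tshift k (Var i) = Var (i + k)"
| "tshift k (Par a) = Par a"

fun shift :: "nat \<Rightarrow> ('r, 'u) fm \<Rightarrow> ('r, 'u) fm" where
  "shift k (Eq s t) = Eq (tshift k s) (tshift k t)"
| "shift k (Rel r ts) = Rel r (map (tshift k) ts)"
| "shift k (Neg \<phi>) = Neg (shift k \<phi>)"
| "shift k (Conj \<phi> \<psi>) = Conj (shift k \<phi>) (shift k \<psi>)"
| "shift k (Ex i \<phi>) = Ex (i + k) (shift k \<phi>)"

lemma teval_tshift: "teval e (tshift k t) = teval (\<lambda>i. e (i + k)) t"
  by (cases t) auto

lemma sat_shift: "sat I e (shift k \<phi>) = sat I (\<lambda>i. e (i + k)) \<phi>"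
proof (induction \<phi> arbitrary: e)
  case (Ex i \<phi>)
  have "\<And>a. (\<lambda>j. (e(i + k := a)) (j + k)) = (\<lambda>j. e (j + k))(i := a)"
    by auto
  then show ?case using Ex by simp
qed (simp_all add: teval_tshift comp_def)

lemma tfv_tshift: "tfv (tshift k t) = (\<lambda>i. i + k) ` tfv t"
  by (cases t) auto

lemma tparams_tshift: "tparams (tshift k t) = tparams t"
  by (cases t) auto

lemma fv_shift: "fv (shift k \<phi>) = (\<lambda>i. i + k) ` fv \<phi>"
  by (induction \<phi>) (auto simp: tfv_tshift)

lemma params_shift: "params (shift k \<phi>) = params \<phi>"
  by (induction \<phi>) (auto simp: tparams_tshift)

fun Ex_block :: "nat \<Rightarrow> nat \<Rightarrow> ('r, 'u) fm \<Rightarrow> ('r, 'u) fm" where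
  "Ex_block k 0 \<phi> = \<phi>"
| "Ex_block k (Suc j) \<phi> = Ex k (Ex_block (Suc k) j \<phi>)"

lemma params_Ex_block: "params (Ex_block k j \<phi>) = params \<phi>"
  by (induction j arbitrary: k) auto

lemma fv_Ex_block: "fv (Ex_block k j \<phi>) = fv \<phi> - {k..<k + j}"
  by (induction j arbitrary: k) auto

lemma ex_length_Suc_conv: "(\<exists>w. length w = Suc j \<and> P w) \<longleftrightarrow> (\<exists>a w. length w = j \<and> P (a # w))"
  by (metis length_Suc_conv)

lemma sat_Ex_block: "sat I e (Ex_block k j \<phi>) \<longleftrightarrow>
   (\<exists>w. length w = j \<and> sat I (\<lambda>i. if k \<le> i \<and> i < k + j then w ! (i - k) else e i) \<phi>)"
proof (induction j arbitrary: k e)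
  case 0
  have "(\<lambda>i. if k \<le> i \<and> i < k + 0 then w ! (i - k) else e i) = e" for w
    by (rule ext) auto
  then show ?case by simp
next
  case (Suc j)
  have "(\<lambda>i. if Suc k \<le> i \<and> i < Suc k + j then w ! (i - Suc k) else (e(k := a)) i)
     = (\<lambda>i. if k \<le> i \<and> i < k + Suc j then (a # w) ! (i - k) else e i)" for a w
  proof
    fix i
    show "(if Suc k \<le> i \<and> i < Suc k + j then w ! (i - Suc k) else (e(k := a)) i)
        = (if k \<le> i \<and> i < k + Suc j then (a # w) ! (i - k) else e i)"
      by (cases "i = k") (auto simp: nth_Cons' Suc_diff_Suc)
  qed
  then show ?case
    by (simp add: Suc.IH ex_length_Suc_conv)
qed

lemma DefI:
  "params \<phi> \<subseteq> B \<Longrightarrow> fv \<phi> \<subseteq> {..<k} \<Longrightarrow> X = {v. length v = k \<and> sat I (\<lambda>i. v ! i) \<phi>}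
    \<Longrightarrow> X \<in> Def I B k"
  unfolding Def_def by blast

lemma DefE:
  assumes "X \<in> Def I B k"
  obtains \<phi> where "params \<phi> \<subseteq> B" "fv \<phi> \<subseteq> {..<k}"
    "X = {v. length v = k \<and> sat I (\<lambda>i. v ! i) \<phi>}"
  using assms unfolding Def_def by blast

lemma tuples_iff [simp]: "u \<in> tuples k \<longleftrightarrow> length u = k"
  by (simp add: tuples_def)

lemma Def_subset_tuples: "X \<in> Def I B k \<Longrightarrow> X \<subseteq> tuples k"
  unfolding Def_def by auto

lemma Def_mono: "B \<subseteq> C \<Longrightarrow> Def I B k \<subseteq> Def I C k"
  unfolding Def_def by blast

lemma Def_algebra: "algebra (tuples k) (Def I B k)"
  unfolding algebra_iff_Int
proof (intro conjI ballI)
  show "Def I B k \<subseteq> Pow (tuples k)"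
    by (auto simp: Def_def)
  show "{} \<in> Def I B k"
    by (rule DefI[of "Neg (Ex 0 (Eq (Var 0) (Var 0)))"]) auto
  show "tuples k - X \<in> Def I B k" if "X \<in> Def I B k" for X
  proof -
    obtain \<phi> where "params \<phi> \<subseteq> B" "fv \<phi> \<subseteq> {..<k}"
      "X = {v. length v = k \<and> sat I (\<lambda>i. v ! i) \<phi>}"
      using \<open>X \<in> Def I B k\<close> by (rule DefE)
    then show ?thesis
      by (intro DefI[of "Neg \<phi>"]) auto
  qed
  show "X \<inter> Y \<in> Def I B k" if "X \<in> Def I B k" "Y \<in> Def I B k" for X Y
  proof -
    obtain \<phi> where "params \<phi> \<subseteq> B" "fv \<phi> \<subseteq> {..<k}"
      "X = {v. length v = k \<and> sat I (\<lambda>i. v ! i) \<phi>}"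
      using \<open>X \<in> Def I B k\<close> by (rule DefE)
    moreover obtain \<psi> where "params \<psi> \<subseteq> B" "fv \<psi> \<subseteq> {..<k}"
      "Y = {v. length v = k \<and> sat I (\<lambda>i. v ! i) \<psi>}"
      using \<open>Y \<in> Def I B k\<close> by (rule DefE)
    ultimately show ?thesis
      by (intro DefI[of "Conj \<phi> \<psi>"]) auto
  qed
qed

lemma Def_Int:
  assumes "X \<in> Def I B k" "Y \<in> Def I B k" shows "X \<inter> Y \<in> Def I B k"
proof -
  interpret algebra "tuples k" "Def I B k"
    by (rule Def_algebra)
  from assms show ?thesis
    by (rule Int)
qed

lemma mem_prodset:
  "X \<subseteq> tuples n \<Longrightarrow> u \<in> prodset X Y \<longleftrightarrow> n \<le> length u \<and> take n u \<in> X \<and> drop n u \<in> Y"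
  unfolding prodset_def by (auto, metis append_take_drop_id)

lemma mem_prodset_tuples_left:
  "u \<in> prodset (tuples n) Y \<longleftrightarrow> n \<le> length u \<and> drop n u \<in> Y"
  using mem_prodset[of "tuples n" n u Y] by auto

lemma prodset_tuples_right:
  assumes "X \<subseteq> tuples n" shows "prodset X (tuples m) = take n -` X \<inter> tuples (n + m)"
  by (auto simp: mem_prodset[OF assms])

lemma Int_prodset_tuples:
  assumes "X \<subseteq> tuples n" "Y \<subseteq> tuples m" shows "prodset X (tuples m) \<inter> prodset (tuples n) Y = prodset X Y"
  using assms(2) by (auto simp: mem_prodset[OF assms(1)] mem_prodset_tuples_left)

lemma Int_prodset_tuples_left:
  "prodset (tuples n) Y \<inter> prodset (tuples n) Y' = prodset (tuples n) (Y \<inter> Y')"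
  by (auto simp: mem_prodset_tuples_left)

lemma Diff_prodset_tuples_left:
  "tuples (n + m) - prodset (tuples n) Y = prodset (tuples n) (tuples m - Y)"
  by (auto simp: mem_prodset_tuples_left)

lemma Def_prodset_tuples_right:
  assumes "X \<in> Def I B n" shows "prodset X (tuples m) \<in> Def I B (n + m)"
  using assms
proof (elim DefE)
  fix \<phi> assume \<phi>: "params \<phi> \<subseteq> B" "fv \<phi> \<subseteq> {..<n}"
    and X: "X = {v. length v = n \<and> sat I (\<lambda>i. v ! i) \<phi>}"
  have "sat I (\<lambda>i. take n u ! i) \<phi> = sat I (\<lambda>i. u ! i) \<phi>" if "length u = n + m" for u
    using \<phi>(2) that by (intro sat_cong) auto
  moreover have "X \<subseteq> tuples n"
    using X by auto
  ultimately have "prodset X (tuples m) = {u. length u = n + m \<and> sat I (\<lambda>i. u ! i) \<phi>}"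
    unfolding prodset_tuples_right[OF \<open>X \<subseteq> tuples n\<close>] by (auto simp: X)
  with \<phi> show ?thesis
    by (intro DefI) auto
qed

lemma Def_prodset_tuples_left:
  assumes "Y \<in> Def I B m" shows "prodset (tuples n) Y \<in> Def I B (n + m)"
  using assms
proof (elim DefE)
  fix \<phi> assume \<phi>: "params \<phi> \<subseteq> B" "fv \<phi> \<subseteq> {..<m}"
    and Y: "Y = {v. length v = m \<and> sat I (\<lambda>i. v ! i) \<phi>}"
  have drop_nth_shift: "(\<lambda>i. drop n u ! i) = (\<lambda>i. u ! (i + n))" if "n \<le> length u" for u
    using that by (auto simp: add.commute)
  have "prodset (tuples n) Y = {u. length u = n + m \<and> sat I (\<lambda>i. u ! i) (shift n \<phi>)}"
    by (auto simp: Y mem_prodset_tuples_left sat_shift drop_nth_shift)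
  with \<phi> show ?thesis
    by (intro DefI) (auto simp: fv_shift params_shift)
qed

lemma Def_image_take:
  assumes "Z \<in> Def I B (n + m)" shows "take n ` Z \<in> Def I B n"
  using assms
proof (elim DefE)
  fix \<phi> assume \<phi>: "params \<phi> \<subseteq> B" "fv \<phi> \<subseteq> {..<n + m}"
    and Z: "Z = {v. length v = n + m \<and> sat I (\<lambda>i. v ! i) \<phi>}"
  have "take n ` Z = {v. length v = n \<and> (\<exists>w. length w = m \<and> v @ w \<in> Z)}"
  proof (intro equalityI subsetI)
    fix v assume "v \<in> take n ` Z"
    then obtain u where "u \<in> Z" "v = take n u" by blast
    then show "v \<in> {v. length v = n \<and> (\<exists>w. length w = m \<and> v @ w \<in> Z)}"
      using Z by (auto intro!: exI[of _ "drop n u"])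
  next
    fix v assume "v \<in> {v. length v = n \<and> (\<exists>w. length w = m \<and> v @ w \<in> Z)}"
    then obtain w where "length v = n" "v @ w \<in> Z" by blast
    then show "v \<in> take n ` Z"
      by (metis append_eq_conv_conj image_eqI)
  qed
  moreover have "sat I (\<lambda>i. if n \<le> i \<and> i < n + m then w ! (i - n) else v ! i) \<phi>
      = sat I (\<lambda>i. (v @ w) ! i) \<phi>" if "length v = n" for v w
    using \<phi>(2) that by (intro sat_cong) (auto simp: nth_append)
  ultimately have "take n ` Z = {v. length v = n \<and> sat I (\<lambda>i. v ! i) (Ex_block n m \<phi>)}"
    unfolding Z sat_Ex_block by auto
  with \<phi> show ?thesis
    by (intro DefI) (auto simp: fv_Ex_block params_Ex_block)
qed

section \<open>Finitely additive probabilities\<close>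

locale fa_prob = algebra \<Omega> M for \<Omega> :: "'a set" and M +
  fixes P :: "'a set \<Rightarrow> real"
  assumes prob_space: "P \<Omega> = 1"
    and nonneg: "X \<in> M \<Longrightarrow> 0 \<le> P X"
    and additive: "X \<in> M \<Longrightarrow> Y \<in> M \<Longrightarrow> X \<inter> Y = {} \<Longrightarrow> P (X \<union> Y) = P X + P Y"
begin

lemma empty: "P {} = 0"
  using additive[of "{}" "{}"] by simp

lemma Int_Diff_split:
  assumes "X \<in> M" "S \<in> M" shows "P X = P (X \<inter> S) + P (X - S)"
proof -
  have "P ((X \<inter> S) \<union> (X - S)) = P (X \<inter> S) + P (X - S)"
    using assms by (intro additive) auto
  then show ?thesis
    by (simp add: Int_Diff_Un)
qed

lemma mono:
  assumes "X \<in> M" "Y \<in> M" "X \<subseteq> Y" shows "P X \<le> P Y"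
proof -
  have "P Y = P X + P (Y - X)"
    using Int_Diff_split[OF assms(2,1)] assms(3) by (simp add: Int_absorb1)
  then show ?thesis
    using nonneg[of "Y - X"] assms(1,2) by auto
qed

lemma Int_null:
  assumes "S \<in> M" "P S = 0" "X \<in> M" shows "P (X \<inter> S) = 0"
proof -
  have "X \<inter> S \<in> M"
    using assms(1,3) by auto
  then show ?thesis
    using mono[of "X \<inter> S" S] nonneg[of "X \<inter> S"] assms(1,2) by auto
qed

lemma Int_conull:
  assumes "S \<in> M" "P (\<Omega> - S) = 0" "X \<in> M" shows "P (X \<inter> S) = P X"
proof -
  have "X - S = X \<inter> (\<Omega> - S)"
    using sets_into_space[OF assms(3)] by blast
  then show ?thesis
    using Int_Diff_split[OF assms(3,1)] Int_null[of "\<Omega> - S" X] assms by auto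
qed

lemma sum_disjoint_family:
  assumes "finite J" "K ` J \<subseteq> M" "disjoint_family_on K J"
  shows "(\<Sum>j\<in>J. P (K j)) = P (\<Union>j\<in>J. K j)"
  using assms
proof (induction J rule: finite_induct)
  case (insert j J)
  then have "K j \<inter> (\<Union>i\<in>J. K i) = {}"
    by (auto simp: disjoint_family_on_def)
  moreover have "(\<Union>i\<in>J. K i) \<in> M"
    using insert by auto
  ultimately show ?case
    using insert by (auto simp: additive disjoint_family_on_mono[OF subset_insertI])
qed (simp add: empty)

lemma sum_partition:
  assumes "finite J" "K ` J \<subseteq> M" "disjoint_family_on K J" "(\<Union>j\<in>J. K j) = \<Omega>"
    and "Y \<in> M" "V \<in> M" "\<forall>j\<in>J. K j \<subseteq> V \<or> K j \<inter> V = {}"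
  shows "(\<Sum>j\<in>J. if K j \<subseteq> V then P (Y \<inter> K j) else 0) = P (Y \<inter> V)"
proof -
  let ?J = "{j\<in>J. K j \<subseteq> V}"
  have "(\<Sum>j\<in>J. if K j \<subseteq> V then P (Y \<inter> K j) else 0) = (\<Sum>j\<in>?J. P (Y \<inter> K j))"
    using assms(1) by (simp add: sum.inter_filter)
  also have "\<dots> = P (\<Union>j\<in>?J. Y \<inter> K j)"
    using assms(1-3,5) by (intro sum_disjoint_family) (auto simp: disjoint_family_on_def)
  also have "(\<Union>j\<in>?J. Y \<inter> K j) = Y \<inter> V"
    using assms(4,7) sets_into_space[OF assms(5)] by blast
  finally show ?thesis .
qed

lemma sum_partition_all:
  assumes "finite J" "K ` J \<subseteq> M" "disjoint_family_on K J" "(\<Union>j\<in>J. K j) = \<Omega>" "Y \<in> M"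
  shows "(\<Sum>j\<in>J. P (Y \<inter> K j)) = P Y"
proof -
  have blocks: "\<forall>j\<in>J. K j \<subseteq> \<Omega>"
    using assms(4) by blast
  then have "(\<Sum>j\<in>J. P (Y \<inter> K j)) = (\<Sum>j\<in>J. if K j \<subseteq> \<Omega> then P (Y \<inter> K j) else 0)"
    by simp
  also have "\<dots> = P (Y \<inter> \<Omega>)"
    using blocks by (intro sum_partition[OF assms top]) blast
  also have "Y \<inter> \<Omega> = Y"
    using sets_into_space[OF assms(5)] by blast
  finally show ?thesis .
qed

lemma conditional:
  assumes "S \<in> M" "0 < P S" shows "fa_prob \<Omega> M (\<lambda>X. P (S \<inter> X) / P S)"
proof unfold_locales
  show "P (S \<inter> \<Omega>) / P S = 1"
    using assms by (simp add: Int_absorb2 sets_into_space)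
  show "0 \<le> P (S \<inter> X) / P S" if "X \<in> M" for X
  proof -
    have "0 \<le> P (S \<inter> X)"
      using assms(1) that by (intro nonneg) auto
    then show ?thesis
      using assms(2) by simp
  qed
  show "P (S \<inter> (X \<union> Y)) / P S = P (S \<inter> X) / P S + P (S \<inter> Y) / P S"
    if "X \<in> M" "Y \<in> M" "X \<inter> Y = {}" for X Y
  proof -
    have "P (S \<inter> X \<union> S \<inter> Y) = P (S \<inter> X) + P (S \<inter> Y)"
      using assms(1) that by (intro additive) auto
    then show ?thesis
      by (simp add: Int_Un_distrib add_divide_distrib)
  qed
qed

lemma prob_compl:
  assumes "S \<in> M" shows "P (\<Omega> - S) = 1 - P S"
  using Int_Diff_split[OF top assms] prob_space sets_into_space[OF assms] by (simp add: Int_absorb1)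

lemma conditional_decompose:
  assumes "S \<in> M" "0 < P S" "P S < 1" "X \<in> M"
  shows "P X = P S * (P (S \<inter> X) / P S) + (1 - P S) * (P ((\<Omega> - S) \<inter> X) / P (\<Omega> - S))"
proof -
  have "(\<Omega> - S) \<inter> X = X - S"
    using sets_into_space[OF assms(4)] by blast
  then show ?thesis
    using assms Int_Diff_split[OF assms(4,1)] prob_compl[OF assms(1)] by (simp add: Int_commute)
qed

end

lemma fa_prob_convex:
  assumes "fa_prob \<Omega> M P" "fa_prob \<Omega> M Q" "0 \<le> t" "t \<le> 1"
  shows "fa_prob \<Omega> M (\<lambda>X. t * P X + (1 - t) * Q X)"
proof -
  interpret P: fa_prob \<Omega> M P by fact
  interpret Q: fa_prob \<Omega> M Q by fact
  show ?thesis
  proof unfold_locales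
    show "t * P \<Omega> + (1 - t) * Q \<Omega> = 1"
      by (simp add: P.prob_space Q.prob_space)
    show "0 \<le> t * P X + (1 - t) * Q X" if "X \<in> M" for X
      using that assms(3,4) P.nonneg[of X] Q.nonneg[of X] by simp
    show "t * P (X \<union> Y) + (1 - t) * Q (X \<union> Y) = t * P X + (1 - t) * Q X + (t * P Y + (1 - t) * Q Y)"
      if "X \<in> M" "Y \<in> M" "X \<inter> Y = {}" for X Y
      using that by (simp add: P.additive Q.additive algebra_simps)
  qed
qed

lemma fa_prob_subalgebra: "fa_prob \<Omega> M P \<Longrightarrow> algebra \<Omega> N \<Longrightarrow> N \<subseteq> M \<Longrightarrow> fa_prob \<Omega> N P"
  unfolding fa_prob_def fa_prob_axioms_def by blast

lemma is_measure_iff_fa_prob: "is_measure I B k P \<longleftrightarrow> fa_prob (tuples k) (Def I B k) P"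
  unfolding is_measure_def fa_prob_def fa_prob_axioms_def using Def_algebra by blast

section \<open>Extending a measure along a marginal\<close>

definition atoms :: "'a set \<Rightarrow> 'a set set \<Rightarrow> 'a set set" where
  "atoms \<Omega> G = (\<lambda>R. {x\<in>\<Omega>. \<forall>g\<in>G. x \<in> g \<longleftrightarrow> g \<in> R}) ` Pow G"

lemma finite_atoms: "finite G \<Longrightarrow> finite (atoms \<Omega> G)"
  unfolding atoms_def by simp

lemma atoms_subset_space: "a \<in> atoms \<Omega> G \<Longrightarrow> a \<subseteq> \<Omega>"
  unfolding atoms_def by auto

lemma atom_subset_or_disjoint: "a \<in> atoms \<Omega> G \<Longrightarrow> g \<in> G \<Longrightarrow> a \<subseteq> g \<or> a \<inter> g = {}"
  unfolding atoms_def by auto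

lemma atoms_disjoint:
  assumes "a \<in> atoms \<Omega> G" "a' \<in> atoms \<Omega> G" "a \<noteq> a'" shows "a \<inter> a' = {}"
proof (rule ccontr)
  obtain R R' where "R \<subseteq> G" "a = {x\<in>\<Omega>. \<forall>g\<in>G. x \<in> g \<longleftrightarrow> g \<in> R}"
    and "R' \<subseteq> G" "a' = {x\<in>\<Omega>. \<forall>g\<in>G. x \<in> g \<longleftrightarrow> g \<in> R'}"
    using assms(1,2) unfolding atoms_def by blast
  moreover assume "a \<inter> a' \<noteq> {}"
  ultimately have "R = R'"
    by blast
  with \<open>a = _\<close> \<open>a' = _\<close> assms(3) show False
    by simp
qed

lemma disjoint_family_atoms: "disjoint_family_on id (atoms \<Omega> G)"
  unfolding disjoint_family_on_def by (simp add: atoms_disjoint)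

lemma Union_atoms: "\<Union> (atoms \<Omega> G) = \<Omega>"
proof
  show "\<Omega> \<subseteq> \<Union> (atoms \<Omega> G)"
  proof
    fix x assume "x \<in> \<Omega>"
    let ?a = "{y\<in>\<Omega>. \<forall>g\<in>G. y \<in> g \<longleftrightarrow> g \<in> {g\<in>G. x \<in> g}}"
    have "?a \<in> atoms \<Omega> G"
      unfolding atoms_def by blast
    moreover have "x \<in> ?a"
      using \<open>x \<in> \<Omega>\<close> by auto
    ultimately show "x \<in> \<Union> (atoms \<Omega> G)"
      by (rule UnionI)
  qed
qed (auto dest: atoms_subset_space)

lemma (in algebra) atoms_in_sets:
  assumes "finite G" "G \<subseteq> M" shows "atoms \<Omega> G \<subseteq> M"
proof -
  have "{x\<in>\<Omega>. \<forall>g\<in>G. x \<in> g \<longleftrightarrow> g \<in> R} \<in> M" for R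
    using assms
  proof (induction G rule: finite_induct)
    case (insert h G)
    have "{x\<in>\<Omega>. \<forall>g\<in>insert h G. x \<in> g \<longleftrightarrow> g \<in> R}
        = {x\<in>\<Omega>. \<forall>g\<in>G. x \<in> g \<longleftrightarrow> g \<in> R} \<inter> (if h \<in> R then h else \<Omega> - h)"
      using sets_into_space[of h] insert.prems by auto
    then show ?case
      using insert by auto
  qed simp
  then show ?thesis
    unfolding atoms_def by auto
qed

lemma unit_cube_fip:
  fixes Cond :: "'i \<Rightarrow> ('a \<Rightarrow> real) set"
  assumes "\<And>i. closed (Cond i)"
    and "\<And>J. finite J \<Longrightarrow> \<exists>\<omega>. (\<forall>W. \<omega> W \<in> {0..1}) \<and> (\<forall>i\<in>J. \<omega> \<in> Cond i)"
  shows "\<exists>\<omega>. (\<forall>W. \<omega> W \<in> {0..1}) \<and> (\<forall>i. \<omega> \<in> Cond i)"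
proof -
  let ?cube = "PiE UNIV (\<lambda>_. {0..1::real}) :: ('a \<Rightarrow> real) set"
  have "?cube \<inter> (\<Inter>i\<in>UNIV. Cond i) \<noteq> {}"
  proof (rule compact_imp_fip_image)
    have "compactin (product_topology (\<lambda>_. euclidean) UNIV) ?cube"
      by (simp add: compactin_PiE)
    then show "compact ?cube"
      by (simp add: euclidean_product_topology)
    show "closed (Cond i)" if "i \<in> UNIV" for i
      by (rule assms(1))
    show "?cube \<inter> (\<Inter>i\<in>J. Cond i) \<noteq> {}" if "finite J" "J \<subseteq> UNIV" for J
    proof -
      obtain \<omega> where "\<forall>W. \<omega> W \<in> {0..1}" "\<forall>i\<in>J. \<omega> \<in> Cond i"
        using assms(2)[OF \<open>finite J\<close>] by blast
      moreover from this(1) have "\<omega> \<in> ?cube"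
        by (simp add: PiE_iff)
      ultimately show ?thesis
        by blast
    qed
  qed
  then obtain \<omega> where "\<omega> \<in> ?cube" "\<forall>i. \<omega> \<in> Cond i"
    by blast
  then show ?thesis
    by (intro exI[of _ \<omega>]) (simp add: PiE_iff)
qed

lemma sum_reverse3:
  "(\<Sum>a\<in>A. \<Sum>b\<in>B. \<Sum>c\<in>C. f a b c) = (\<Sum>c\<in>C. \<Sum>b\<in>B. \<Sum>a\<in>A. f a b c)"
proof -
  have "(\<Sum>a\<in>A. \<Sum>b\<in>B. \<Sum>c\<in>C. f a b c) = (\<Sum>a\<in>A. \<Sum>c\<in>C. \<Sum>b\<in>B. f a b c)"
    by (rule sum.cong[OF refl], rule sum.swap)
  also have "\<dots> = (\<Sum>c\<in>C. \<Sum>a\<in>A. \<Sum>b\<in>B. f a b c)"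
    by (rule sum.swap)
  also have "\<dots> = (\<Sum>c\<in>C. \<Sum>b\<in>B. \<Sum>a\<in>A. f a b c)"
    by (rule sum.cong[OF refl], rule sum.swap)
  finally show ?thesis .
qed

lemma closed_eval_constraint:
  "closed {\<omega> :: 'a \<Rightarrow> real. P \<longrightarrow> \<omega> W = c}"
  "closed {\<omega> :: 'a \<Rightarrow> real. P \<longrightarrow> \<omega> W = \<omega> W\<^sub>1 + \<omega> W\<^sub>2}"
  by (intro closed_Collect_imp open_Collect_const closed_Collect_eq continuous_on_add
      continuous_on_const continuous_on_product_coordinates)+

text \<open>In the application \<Omega>' = U^(n+m), \<Omega> = U^n, \<pi> = take n, C = L_xy(A), D = L_x(U) and
  B = L_x(A); image_in_B says that L(A) is closed under existential quantification.\<close>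
locale marginal_extension =
  l: fa_prob \<Omega>' C l + mu: fa_prob \<Omega> D \<mu> + B: algebra \<Omega> B
  for \<Omega>' :: "'a set" and C l and \<Omega> :: "'b set" and D \<mu> and B +
  fixes \<pi> :: "'a \<Rightarrow> 'b"
  assumes B_subset_D: "B \<subseteq> D"
    and image_in_B: "c \<in> C \<Longrightarrow> \<pi> ` c \<in> B"
    and vimage_in_C: "b \<in> B \<Longrightarrow> \<pi> -` b \<inter> \<Omega>' \<in> C"
    and marginal: "b \<in> B \<Longrightarrow> l (\<pi> -` b \<inter> \<Omega>') = \<mu> b"
begin

lemma image_space: "\<pi> ` \<Omega>' \<subseteq> \<Omega>"
  using B.sets_into_space[OF image_in_B[OF l.top]] .

context
  fixes F :: "'a set set" and G :: "'b set set"
  assumes finite_F: "finite F" and F_subset: "F \<subseteq> C"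
    and finite_G: "finite G" and G_subset: "G \<subseteq> D"
begin

definition "atoms_F = atoms \<Omega>' F"
definition "atoms_proj = atoms \<Omega> ((`) \<pi> ` atoms_F)"
definition "atoms_G = atoms \<Omega> G"

lemma atoms_F: "finite atoms_F" "atoms_F \<subseteq> C"
  unfolding atoms_F_def using finite_atoms[OF finite_F] l.atoms_in_sets[OF finite_F F_subset] .

lemma atoms_proj: "finite atoms_proj" "atoms_proj \<subseteq> B"
proof -
  have "finite ((`) \<pi> ` atoms_F)" "(`) \<pi> ` atoms_F \<subseteq> B"
    using atoms_F image_in_B by auto
  then show "finite atoms_proj" "atoms_proj \<subseteq> B"
    unfolding atoms_proj_def by (auto intro: finite_atoms dest: B.atoms_in_sets)
qed

lemma atoms_G: "finite atoms_G" "atoms_G \<subseteq> D"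
  unfolding atoms_G_def using finite_atoms[OF finite_G] mu.atoms_in_sets[OF finite_G G_subset] .

lemma atoms_F_subset_space: "a \<in> atoms_F \<Longrightarrow> a \<subseteq> \<Omega>'"
  unfolding atoms_F_def by (rule atoms_subset_space)

lemma atoms_G_subset_space: "c \<in> atoms_G \<Longrightarrow> c \<subseteq> \<Omega>"
  unfolding atoms_G_def by (rule atoms_subset_space)

lemma atom_Int_vimage: "a \<in> atoms_F \<Longrightarrow> a \<inter> (\<pi> -` b \<inter> \<Omega>') = a \<inter> \<pi> -` b"
  using atoms_F_subset_space by blast

lemma Int_vimage_in_C: "a \<in> atoms_F \<Longrightarrow> b \<in> atoms_proj \<Longrightarrow> a \<inter> \<pi> -` b \<in> C"
  using l.Int[of a "\<pi> -` b \<inter> \<Omega>'"] atoms_F atoms_proj vimage_in_C by (auto simp: atom_Int_vimage)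

definition weight :: "'a set \<Rightarrow> 'b set \<Rightarrow> 'b set \<Rightarrow> real" where
  "weight a b c = l (a \<inter> \<pi> -` b) * \<mu> (b \<inter> c) / \<mu> b"

definition witness :: "'a set \<Rightarrow> 'b set \<Rightarrow> 'b set \<Rightarrow> 'a" where
  "witness a b c = (SOME u. u \<in> a \<inter> \<pi> -` (b \<inter> c))"

text \<open>The mass l (a \<inter> \<pi> -` b) of an atom is split over the atoms c in proportion to
  \<mu> (b \<inter> c) / \<mu> b (zero when \<mu> b = 0, as x / 0 = 0) and put on a point of a \<inter> \<pi> -` (b \<inter> c).
  That set is nonempty whenever the weight is nonzero (witness_mem), so the SOME in witness only
  matters where it is well defined.\<close>
definition point_mixture :: "'a set \<Rightarrow> real" where
  "point_mixture W = (\<Sum>a\<in>atoms_F. \<Sum>b\<in>atoms_proj. \<Sum>c\<in>atoms_G. weight a b c * indicator W (witness a b c))"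

lemma Int_atoms_in_D: "b \<in> atoms_proj \<Longrightarrow> c \<in> atoms_G \<Longrightarrow> b \<inter> c \<in> D"
  using atoms_proj(2) atoms_G(2) B_subset_D by (intro mu.Int) auto

lemma weight_nonneg:
  "a \<in> atoms_F \<Longrightarrow> b \<in> atoms_proj \<Longrightarrow> c \<in> atoms_G \<Longrightarrow> 0 \<le> weight a b c"
  unfolding weight_def using Int_vimage_in_C Int_atoms_in_D atoms_proj(2) B_subset_D
  by (intro divide_nonneg_nonneg mult_nonneg_nonneg l.nonneg mu.nonneg) auto

lemma witness_mem:
  assumes "a \<in> atoms_F" "b \<in> atoms_proj" "c \<in> atoms_G" "weight a b c \<noteq> 0"
  shows "witness a b c \<in> a" "\<pi> (witness a b c) \<in> c"
proof -
  have "a \<inter> \<pi> -` b \<noteq> {}" "b \<inter> c \<noteq> {}"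
    using assms(4) l.empty mu.empty unfolding weight_def by auto
  then obtain u x where u: "u \<in> a" "\<pi> u \<in> b" and x: "x \<in> b" "x \<in> c"
    by blast
  have "b \<subseteq> \<pi> ` a \<or> b \<inter> \<pi> ` a = {}"
    using assms(1,2) unfolding atoms_proj_def by (intro atom_subset_or_disjoint) auto
  with u x obtain v where "v \<in> a" "\<pi> v = x"
    by blast
  with x have "\<exists>u. u \<in> a \<inter> \<pi> -` (b \<inter> c)"
    by blast
  then have "witness a b c \<in> a \<inter> \<pi> -` (b \<inter> c)"
    unfolding witness_def by (rule someI_ex)
  then show "witness a b c \<in> a" "\<pi> (witness a b c) \<in> c"
    by auto
qed

lemma Int_vimage_null:
  assumes "a \<in> atoms_F" "b \<in> atoms_proj" "\<mu> b = 0" shows "l (a \<inter> \<pi> -` b) = 0"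
proof -
  have "\<pi> -` b \<inter> \<Omega>' \<in> C" "l (\<pi> -` b \<inter> \<Omega>') = 0" "a \<in> C"
    using assms atoms_F(2) atoms_proj(2) vimage_in_C marginal by auto
  then have "l (a \<inter> (\<pi> -` b \<inter> \<Omega>')) = 0"
    using l.Int_null[of "\<pi> -` b \<inter> \<Omega>'" a] by blast
  then show ?thesis
    by (simp only: atom_Int_vimage[OF assms(1)])
qed

lemma atoms_F_partition:
  "id ` atoms_F \<subseteq> C" "disjoint_family_on id atoms_F" "(\<Union>a\<in>atoms_F. id a) = \<Omega>'"
  using atoms_F(2) disjoint_family_atoms Union_atoms unfolding atoms_F_def by simp_all

lemma atoms_G_partition:
  "id ` atoms_G \<subseteq> D" "disjoint_family_on id atoms_G" "(\<Union>c\<in>atoms_G. id c) = \<Omega>"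
  using atoms_G(2) disjoint_family_atoms Union_atoms unfolding atoms_G_def by simp_all

lemma sum_atoms_F: "Y \<in> C \<Longrightarrow> (\<Sum>a\<in>atoms_F. l (Y \<inter> a)) = l Y"
  using l.sum_partition_all[OF atoms_F(1) atoms_F_partition] by simp

lemma sum_atoms_G: "Y \<in> D \<Longrightarrow> (\<Sum>c\<in>atoms_G. \<mu> (Y \<inter> c)) = \<mu> Y"
  using mu.sum_partition_all[OF atoms_G(1) atoms_G_partition] by simp

lemma sum_atoms_proj_mu:
  assumes "Y \<in> D" shows "(\<Sum>b\<in>atoms_proj. \<mu> (b \<inter> Y)) = \<mu> Y"
proof -
  have "id ` atoms_proj \<subseteq> D" "disjoint_family_on id atoms_proj" "(\<Union>b\<in>atoms_proj. id b) = \<Omega>"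
    using atoms_proj(2) B_subset_D disjoint_family_atoms Union_atoms unfolding atoms_proj_def by simp_all
  from mu.sum_partition_all[OF atoms_proj(1) this assms] show ?thesis
    by (simp add: Int_commute)
qed

lemma sum_atoms_proj_l:
  assumes "a \<in> atoms_F" shows "(\<Sum>b\<in>atoms_proj. l (a \<inter> \<pi> -` b)) = l a"
proof -
  let ?K = "\<lambda>b. \<pi> -` b \<inter> \<Omega>'"
  have "?K ` atoms_proj \<subseteq> C"
    using atoms_proj(2) vimage_in_C by auto
  moreover have "disjoint_family_on ?K atoms_proj"
    unfolding disjoint_family_on_def
  proof (intro ballI impI)
    fix m n assume "m \<in> atoms_proj" "n \<in> atoms_proj" "m \<noteq> n"
    then have "m \<inter> n = {}"
      unfolding atoms_proj_def by (rule atoms_disjoint)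
    then show "?K m \<inter> ?K n = {}"
      by blast
  qed
  moreover have "(\<Union>b\<in>atoms_proj. ?K b) = \<Omega>'"
  proof (intro equalityI subsetI)
    fix u assume "u \<in> \<Omega>'"
    then have "\<pi> u \<in> \<Union> atoms_proj"
      using image_space unfolding atoms_proj_def Union_atoms by blast
    with \<open>u \<in> \<Omega>'\<close> show "u \<in> (\<Union>b\<in>atoms_proj. ?K b)"
      by blast
  qed blast
  moreover have "a \<in> C"
    using assms atoms_F(2) by auto
  ultimately have "(\<Sum>b\<in>atoms_proj. l (a \<inter> ?K b)) = l a"
    by (rule l.sum_partition_all[OF atoms_proj(1)])
  then show ?thesis
    by (simp only: atom_Int_vimage[OF assms])
qed

lemma sum_weight_G:
  assumes "a \<in> atoms_F" "b \<in> atoms_proj" shows "(\<Sum>c\<in>atoms_G. weight a b c) = l (a \<inter> \<pi> -` b)"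
proof (cases "\<mu> b = 0")
  case True
  then show ?thesis
    using Int_vimage_null[OF assms] by (simp add: weight_def)
next
  case False
  have "(\<Sum>c\<in>atoms_G. weight a b c) = l (a \<inter> \<pi> -` b) / \<mu> b * (\<Sum>c\<in>atoms_G. \<mu> (b \<inter> c))"
    by (simp add: weight_def sum_distrib_left)
  also have "\<dots> = l (a \<inter> \<pi> -` b)"
    using sum_atoms_G[of b] assms(2) atoms_proj(2) B_subset_D False by auto
  finally show ?thesis .
qed

lemma sum_weight_F:
  assumes "b \<in> atoms_proj" "c \<in> atoms_G" shows "(\<Sum>a\<in>atoms_F. weight a b c) = \<mu> (b \<inter> c)"
proof (cases "\<mu> b = 0")
  case True
  have "b \<in> D" "c \<in> D"
    using assms atoms_proj(2) atoms_G(2) B_subset_D by auto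
  then have "\<mu> (c \<inter> b) = 0"
    using True by (intro mu.Int_null)
  with True show ?thesis
    by (simp add: weight_def Int_commute)
next
  case False
  have "(\<Sum>a\<in>atoms_F. weight a b c) = \<mu> (b \<inter> c) / \<mu> b * (\<Sum>a\<in>atoms_F. l (a \<inter> \<pi> -` b))"
    unfolding weight_def sum_distrib_left by (rule sum.cong) auto
  also have "(\<Sum>a\<in>atoms_F. l (a \<inter> \<pi> -` b)) = (\<Sum>a\<in>atoms_F. l ((\<pi> -` b \<inter> \<Omega>') \<inter> a))"
    using atom_Int_vimage by (intro sum.cong) (auto simp: Int_commute)
  also have "\<dots> = l (\<pi> -` b \<inter> \<Omega>')"
    using assms(1) atoms_proj(2) vimage_in_C by (intro sum_atoms_F) auto
  also have "\<dots> = \<mu> b"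
    using assms(1) atoms_proj(2) marginal by auto
  finally show ?thesis
    using False by simp
qed

lemma point_mixture_eq:
  assumes "\<And>a b c. a \<in> atoms_F \<Longrightarrow> b \<in> atoms_proj \<Longrightarrow> c \<in> atoms_G \<Longrightarrow> weight a b c \<noteq> 0
      \<Longrightarrow> indicator W (witness a b c) = f a b c"
  shows "point_mixture W = (\<Sum>a\<in>atoms_F. \<Sum>b\<in>atoms_proj. \<Sum>c\<in>atoms_G. weight a b c * f a b c)"
  unfolding point_mixture_def
proof (intro sum.cong refl)
  fix a b c assume "a \<in> atoms_F" "b \<in> atoms_proj" "c \<in> atoms_G"
  then show "weight a b c * indicator W (witness a b c) = weight a b c * f a b c"
    using assms by (cases "weight a b c = 0") auto
qed

lemma point_mixture_union_of_atoms_F: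
  assumes "Z \<in> C" "\<forall>a\<in>atoms_F. a \<subseteq> Z \<or> a \<inter> Z = {}"
  shows "point_mixture Z = l Z"
proof -
  have "point_mixture Z = (\<Sum>a\<in>atoms_F. \<Sum>b\<in>atoms_proj. \<Sum>c\<in>atoms_G. weight a b c * (if a \<subseteq> Z then 1 else 0))"
  proof (rule point_mixture_eq)
    fix a b c assume "a \<in> atoms_F" "b \<in> atoms_proj" "c \<in> atoms_G" "weight a b c \<noteq> 0"
    then have "witness a b c \<in> a"
      by (rule witness_mem)
    then show "indicator Z (witness a b c) = (if a \<subseteq> Z then 1 else 0)"
      using assms(2) \<open>a \<in> atoms_F\<close> by (auto simp: indicator_def)
  qed
  also have "\<dots> = (\<Sum>a\<in>atoms_F. if a \<subseteq> Z then l a else 0)"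
  proof (rule sum.cong[OF refl])
    fix a assume "a \<in> atoms_F"
    then show "(\<Sum>b\<in>atoms_proj. \<Sum>c\<in>atoms_G. weight a b c * (if a \<subseteq> Z then 1 else 0))
        = (if a \<subseteq> Z then l a else 0)"
      by (cases "a \<subseteq> Z") (simp_all add: sum_weight_G sum_atoms_proj_l)
  qed
  also have "\<dots> = (\<Sum>a\<in>atoms_F. if id a \<subseteq> Z then l (\<Omega>' \<inter> id a) else 0)"
    using atoms_F_subset_space by (intro sum.cong refl) (auto simp: Int_absorb1)
  also have "\<dots> = l (\<Omega>' \<inter> Z)"
    using assms by (intro l.sum_partition[OF atoms_F(1) atoms_F_partition]) auto
  also have "\<dots> = l Z"
    using l.sets_into_space[OF assms(1)] by (simp add: Int_absorb1)
  finally show ?thesis .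
qed

lemma point_mixture_vimage_union_of_atoms_G:
  assumes "X \<in> D" "\<forall>c\<in>atoms_G. c \<subseteq> X \<or> c \<inter> X = {}"
  shows "point_mixture (\<pi> -` X \<inter> \<Omega>') = \<mu> X"
proof -
  let ?f = "\<lambda>a b c. weight a b c * (if c \<subseteq> X then 1 else 0)"
  have "point_mixture (\<pi> -` X \<inter> \<Omega>') = (\<Sum>a\<in>atoms_F. \<Sum>b\<in>atoms_proj. \<Sum>c\<in>atoms_G. ?f a b c)"
  proof (rule point_mixture_eq)
    fix a b c assume abc: "a \<in> atoms_F" "b \<in> atoms_proj" "c \<in> atoms_G" and "weight a b c \<noteq> 0"
    then have "witness a b c \<in> \<Omega>'" "\<pi> (witness a b c) \<in> c"
      using witness_mem atoms_F_subset_space by blast+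
    then show "indicator (\<pi> -` X \<inter> \<Omega>') (witness a b c) = (if c \<subseteq> X then 1 else 0)"
      using assms(2) abc(3) by (auto simp: indicator_def)
  qed
  also have "\<dots> = (\<Sum>c\<in>atoms_G. \<Sum>b\<in>atoms_proj. \<Sum>a\<in>atoms_F. ?f a b c)"
    by (rule sum_reverse3)
  also have "\<dots> = (\<Sum>c\<in>atoms_G. if c \<subseteq> X then \<mu> c else 0)"
  proof (rule sum.cong[OF refl])
    fix c assume c: "c \<in> atoms_G"
    then have "c \<in> D"
      using atoms_G(2) by blast
    with c show "(\<Sum>b\<in>atoms_proj. \<Sum>a\<in>atoms_F. ?f a b c) = (if c \<subseteq> X then \<mu> c else 0)"
      by (cases "c \<subseteq> X") (simp_all add: sum_distrib_right[symmetric] sum_weight_F sum_atoms_proj_mu)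
  qed
  also have "\<dots> = (\<Sum>c\<in>atoms_G. if id c \<subseteq> X then \<mu> (\<Omega> \<inter> id c) else 0)"
    using atoms_G_subset_space by (intro sum.cong refl) (auto simp: Int_absorb1)
  also have "\<dots> = \<mu> (\<Omega> \<inter> X)"
    using assms by (intro mu.sum_partition[OF atoms_G(1) atoms_G_partition]) auto
  also have "\<dots> = \<mu> X"
    using mu.sets_into_space[OF assms(1)] by (simp add: Int_absorb1)
  finally show ?thesis .
qed

lemma point_mixture_space: "point_mixture \<Omega>' = 1"
  using point_mixture_union_of_atoms_F[OF l.top] atoms_F_subset_space l.prob_space by auto

lemma point_mixture_nonneg: "0 \<le> point_mixture W"
  unfolding point_mixture_def by (intro sum_nonneg mult_nonneg_nonneg weight_nonneg) auto

lemma point_mixture_le_space: "point_mixture W \<le> point_mixture \<Omega>'"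
  unfolding point_mixture_def
proof (intro sum_mono)
  fix a b c assume abc: "a \<in> atoms_F" "b \<in> atoms_proj" "c \<in> atoms_G"
  show "weight a b c * indicator W (witness a b c) \<le> weight a b c * indicator \<Omega>' (witness a b c)"
  proof (cases "weight a b c = 0")
    case False
    then have "witness a b c \<in> \<Omega>'"
      using witness_mem(1)[OF abc] atoms_F_subset_space[OF abc(1)] by blast
    then show ?thesis
      using weight_nonneg[OF abc] by (simp add: indicator_def)
  qed simp
qed

lemma point_mixture_additive: "W\<^sub>1 \<inter> W\<^sub>2 = {} \<Longrightarrow> point_mixture (W\<^sub>1 \<union> W\<^sub>2) = point_mixture W\<^sub>1 + point_mixture W\<^sub>2"
  unfolding point_mixture_def by (simp add: indicator_disj_union distrib_left sum.distrib)

lemma finite_extension: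
  "\<exists>\<omega>. (\<forall>W. \<omega> W \<in> {0..1}) \<and> \<omega> \<Omega>' = 1
     \<and> (\<forall>W\<^sub>1 W\<^sub>2. W\<^sub>1 \<inter> W\<^sub>2 = {} \<longrightarrow> \<omega> (W\<^sub>1 \<union> W\<^sub>2) = \<omega> W\<^sub>1 + \<omega> W\<^sub>2)
     \<and> (\<forall>Z\<in>F. \<omega> Z = l Z) \<and> (\<forall>X\<in>G. \<omega> (\<pi> -` X \<inter> \<Omega>') = \<mu> X)"
proof (intro exI conjI allI ballI impI)
  show "point_mixture W \<in> {0..1}" for W
    using point_mixture_nonneg point_mixture_le_space point_mixture_space by simp
  show "point_mixture \<Omega>' = 1"
    by (rule point_mixture_space)
  show "point_mixture (W\<^sub>1 \<union> W\<^sub>2) = point_mixture W\<^sub>1 + point_mixture W\<^sub>2" if "W\<^sub>1 \<inter> W\<^sub>2 = {}" for W\<^sub>1 W\<^sub>2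
    using that by (rule point_mixture_additive)
  show "point_mixture Z = l Z" if "Z \<in> F" for Z
  proof (rule point_mixture_union_of_atoms_F)
    show "Z \<in> C"
      using that F_subset by blast
    show "\<forall>a\<in>atoms_F. a \<subseteq> Z \<or> a \<inter> Z = {}"
      using atom_subset_or_disjoint[of _ \<Omega>' F Z] that unfolding atoms_F_def by blast
  qed
  show "point_mixture (\<pi> -` X \<inter> \<Omega>') = \<mu> X" if "X \<in> G" for X
  proof (rule point_mixture_vimage_union_of_atoms_G)
    show "X \<in> D"
      using that G_subset by blast
    show "\<forall>c\<in>atoms_G. c \<subseteq> X \<or> c \<inter> X = {}"
      using atom_subset_or_disjoint[of _ \<Omega> G X] that unfolding atoms_G_def by blast
  qed
qed

end

text \<open>The index (W1, W2, X) bundles additivity at W1, W2 with agreement at W1 and at X.\<close>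
definition extension_constraint :: "'a set \<times> 'a set \<times> 'b set \<Rightarrow> ('a set \<Rightarrow> real) set" where
  "extension_constraint i = {\<omega>. \<omega> \<Omega>' = 1}
    \<inter> {\<omega>. fst i \<inter> fst (snd i) = {} \<longrightarrow> \<omega> (fst i \<union> fst (snd i)) = \<omega> (fst i) + \<omega> (fst (snd i))}
    \<inter> {\<omega>. fst i \<in> C \<longrightarrow> \<omega> (fst i) = l (fst i)}
    \<inter> {\<omega>. snd (snd i) \<in> D \<longrightarrow> \<omega> (\<pi> -` snd (snd i) \<inter> \<Omega>') = \<mu> (snd (snd i))}"

lemma closed_extension_constraint: "closed (extension_constraint i)"
  unfolding extension_constraint_def using closed_eval_constraint(1)[of True]
  by (intro closed_Int closed_eval_constraint) simp_all

lemma finite_extension_constraints: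
  assumes "finite J" shows "\<exists>\<omega>. (\<forall>W. \<omega> W \<in> {0..1}) \<and> (\<forall>i\<in>J. \<omega> \<in> extension_constraint i)"
proof -
  have fin: "finite (fst ` J \<inter> C)" "finite ((\<lambda>i. snd (snd i)) ` J \<inter> D)"
    using assms by simp_all
  obtain \<omega> where \<omega>: "\<forall>W. \<omega> W \<in> {0..1}" "\<omega> \<Omega>' = 1"
    "\<forall>W\<^sub>1 W\<^sub>2. W\<^sub>1 \<inter> W\<^sub>2 = {} \<longrightarrow> \<omega> (W\<^sub>1 \<union> W\<^sub>2) = \<omega> W\<^sub>1 + \<omega> W\<^sub>2"
    "\<forall>Z\<in>fst ` J \<inter> C. \<omega> Z = l Z" "\<forall>X\<in>(\<lambda>i. snd (snd i)) ` J \<inter> D. \<omega> (\<pi> -` X \<inter> \<Omega>') = \<mu> X"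
    using finite_extension[OF fin(1) Int_lower2 fin(2) Int_lower2] by (elim exE conjE) (rule that)
  have "\<omega> \<in> extension_constraint i" if "i \<in> J" for i
  proof -
    have "fst i \<in> fst ` J" "snd (snd i) \<in> (\<lambda>i. snd (snd i)) ` J"
      using that by auto
    then have "fst i \<in> C \<longrightarrow> \<omega> (fst i) = l (fst i)"
      "snd (snd i) \<in> D \<longrightarrow> \<omega> (\<pi> -` snd (snd i) \<inter> \<Omega>') = \<mu> (snd (snd i))"
      using \<omega>(4,5) by blast+
    then show ?thesis
      using \<omega>(2,3) unfolding extension_constraint_def by simp
  qed
  with \<omega>(1) show ?thesis
    by blast
qed

theorem extension_exists:
  "\<exists>\<omega>. fa_prob \<Omega>' (Pow \<Omega>') \<omega> \<and> (\<forall>Z\<in>C. \<omega> Z = l Z) \<and> (\<forall>X\<in>D. \<omega> (\<pi> -` X \<inter> \<Omega>') = \<mu> X)"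
proof -
  obtain \<omega> where \<omega>: "\<And>W. \<omega> W \<in> {0..1}" "\<And>i. \<omega> \<in> extension_constraint i"
    using unit_cube_fip[OF closed_extension_constraint finite_extension_constraints] by blast
  have "fa_prob \<Omega>' (Pow \<Omega>') \<omega>"
  proof (intro fa_prob.intro algebra_Pow fa_prob_axioms.intro)
    show "\<omega> \<Omega>' = 1"
      using \<omega>(2)[of "({}, {}, {})"] by (simp add: extension_constraint_def)
    show "0 \<le> \<omega> X" for X
      using \<omega>(1)[of X] by simp
    show "\<omega> (X \<union> Y) = \<omega> X + \<omega> Y" if "X \<inter> Y = {}" for X Y
      using \<omega>(2)[of "(X, Y, {})"] that by (simp add: extension_constraint_def)
  qed
  moreover have "\<omega> Z = l Z" if "Z \<in> C" for Z
    using \<omega>(2)[of "(Z, {}, {})"] that by (simp add: extension_constraint_def)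
  moreover have "\<omega> (\<pi> -` X \<inter> \<Omega>') = \<mu> X" if "X \<in> D" for X
    using \<omega>(2)[of "({}, {}, X)"] that by (simp add: extension_constraint_def)
  ultimately show ?thesis
    by blast
qed

end

section \<open>Localizing a separated amalgam\<close>

definition lifts :: "('r \<Rightarrow> 'u list \<Rightarrow> bool) \<Rightarrow> 'u set \<Rightarrow> nat \<Rightarrow> nat
    \<Rightarrow> ('u list set \<Rightarrow> real) \<Rightarrow> ('u list set \<Rightarrow> real) \<Rightarrow> ('u list set \<Rightarrow> real) set" where
  "lifts I A n m \<mu> lam = {\<omega>. is_measure I UNIV (n + m) \<omega> \<and> (\<forall>Z\<in>Def I A (n + m). \<omega> Z = lam Z)
     \<and> (\<forall>X\<in>Def I UNIV n. pix m \<omega> X = \<mu> X)}"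

lemma E_witness_iff_lifts:
  "E_witness I A n m \<mu> \<nu> lam \<longleftrightarrow> is_measure I A (n + m) lam \<and> (\<forall>X\<in>Def I A n. pix m lam X = \<mu> X)
     \<and> (\<forall>\<omega>\<in>lifts I A n m \<mu> lam. \<forall>Y\<in>Def I UNIV m. piy n \<omega> Y = \<nu> Y)"
  unfolding E_witness_def lifts_def by blast

lemma localize_eq: "localize P S = (\<lambda>X. P (S \<inter> X) / P S)"
  unfolding localize_def by (rule refl)

lemma marginal_extension_take:
  assumes "is_measure I UNIV n \<mu>" "is_measure I A (n + m) lam" "\<forall>X\<in>Def I A n. pix m lam X = \<mu> X"
  shows "marginal_extension (tuples (n + m)) (Def I A (n + m)) lam (tuples n) (Def I UNIV n) \<mu>
    (Def I A n) (take n)"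
proof (intro marginal_extension.intro marginal_extension_axioms.intro)
  show "fa_prob (tuples (n + m)) (Def I A (n + m)) lam" "fa_prob (tuples n) (Def I UNIV n) \<mu>"
    using assms(1,2) by (simp_all add: is_measure_iff_fa_prob)
  show "algebra (tuples n) (Def I A n)"
    by (rule Def_algebra)
  show "Def I A n \<subseteq> Def I UNIV n"
    by (rule Def_mono) simp
  show "take n ` c \<in> Def I A n" if "c \<in> Def I A (n + m)" for c
    using that by (rule Def_image_take)
  show "take n -` b \<inter> tuples (n + m) \<in> Def I A (n + m)" "lam (take n -` b \<inter> tuples (n + m)) = \<mu> b"
    if "b \<in> Def I A n" for b
  proof -
    have "take n -` b \<inter> tuples (n + m) = prodset b (tuples m)"
      using prodset_tuples_right[OF Def_subset_tuples[OF that]] by simp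
    then show "take n -` b \<inter> tuples (n + m) \<in> Def I A (n + m)" "lam (take n -` b \<inter> tuples (n + m)) = \<mu> b"
      using that assms(3) Def_prodset_tuples_right[OF that, of m] by (simp_all add: pix_def)
  qed
qed

lemma lifts_nonempty:
  assumes "is_measure I UNIV n \<mu>" "is_measure I A (n + m) lam" "\<forall>X\<in>Def I A n. pix m lam X = \<mu> X"
  shows "lifts I A n m \<mu> lam \<noteq> {}"
proof -
  obtain \<omega> where \<omega>: "fa_prob (tuples (n + m)) (Pow (tuples (n + m))) \<omega>"
    "\<forall>Z\<in>Def I A (n + m). \<omega> Z = lam Z" "\<forall>X\<in>Def I UNIV n. \<omega> (take n -` X \<inter> tuples (n + m)) = \<mu> X"
    using marginal_extension.extension_exists[OF marginal_extension_take[OF assms]] by (elim exE conjE) (rule that)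
  have "is_measure I UNIV (n + m) \<omega>"
    unfolding is_measure_iff_fa_prob
    by (rule fa_prob_subalgebra[OF \<omega>(1) Def_algebra]) (use Def_subset_tuples in blast)
  moreover have "pix m \<omega> X = \<mu> X" if "X \<in> Def I UNIV n" for X
    using \<omega>(3) that by (simp add: pix_def prodset_tuples_right[OF Def_subset_tuples[OF that]])
  ultimately have "\<omega> \<in> lifts I A n m \<mu> lam"
    using \<omega>(2) unfolding lifts_def by blast
  then show ?thesis
    by blast
qed

lemma E_witness_piy_eq:
  assumes "E_witness I A n m \<mu> \<nu> lam" "is_measure I UNIV n \<mu>" "Y \<in> Def I A m"
  shows "piy n lam Y = \<nu> Y"
proof -
  obtain \<omega> where \<omega>: "\<omega> \<in> lifts I A n m \<mu> lam"
    using lifts_nonempty assms(1,2) unfolding E_witness_iff_lifts by blast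
  have "piy n lam Y = piy n \<omega> Y"
    using \<omega> Def_prodset_tuples_left[OF assms(3)] unfolding lifts_def piy_def by simp
  also have "\<dots> = \<nu> Y"
    using \<omega> assms(1) Def_mono[of A UNIV] assms(3) unfolding E_witness_iff_lifts by blast
  finally show ?thesis .
qed

lemma amalgam_pix_localize:
  assumes "amalgam I A n m lam" "Y \<in> Def I A m" "piy n lam Y \<noteq> 0" "X \<in> Def I A n"
  shows "pix m (localize lam (prodset (tuples n) Y)) X = pix m lam X"
proof -
  have "prodset (tuples n) Y \<inter> prodset X (tuples m) = prodset X Y"
    using Int_prodset_tuples[OF Def_subset_tuples[OF assms(4)] Def_subset_tuples[OF assms(2)]]
    by (simp add: Int_commute)
  then have "pix m (localize lam (prodset (tuples n) Y)) X = lam (prodset X Y) / piy n lam Y"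
    by (simp add: localize_def pix_def piy_def)
  also have "\<dots> = pix m lam X * piy n lam Y / piy n lam Y"
    using assms(1,2,4) unfolding amalgam_def by simp
  also have "\<dots> = pix m lam X"
    using assms(3) by simp
  finally show ?thesis .
qed

lemma lifts_mixture:
  assumes lam: "is_measure I A (n + m) lam" and S: "S \<in> Def I A (n + m)" "0 < lam S" "lam S < 1"
    and \<omega>\<^sub>1: "\<omega>\<^sub>1 \<in> lifts I A n m \<mu> (localize lam S)"
    and \<omega>\<^sub>2: "\<omega>\<^sub>2 \<in> lifts I A n m \<mu> (localize lam (tuples (n + m) - S))"
  shows "(\<lambda>W. lam S * \<omega>\<^sub>1 W + (1 - lam S) * \<omega>\<^sub>2 W) \<in> lifts I A n m \<mu> lam"
proof -
  interpret fa_prob "tuples (n + m)" "Def I A (n + m)" lam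
    using lam by (simp add: is_measure_iff_fa_prob)
  have "is_measure I UNIV (n + m) (\<lambda>W. lam S * \<omega>\<^sub>1 W + (1 - lam S) * \<omega>\<^sub>2 W)"
    using \<omega>\<^sub>1 \<omega>\<^sub>2 S(2,3) unfolding lifts_def is_measure_iff_fa_prob by (intro fa_prob_convex) auto
  moreover have "lam S * \<omega>\<^sub>1 Z + (1 - lam S) * \<omega>\<^sub>2 Z = lam Z" if "Z \<in> Def I A (n + m)" for Z
    using \<omega>\<^sub>1 \<omega>\<^sub>2 that conditional_decompose[OF S that] unfolding lifts_def localize_def by simp
  moreover have "pix m (\<lambda>W. lam S * \<omega>\<^sub>1 W + (1 - lam S) * \<omega>\<^sub>2 W) X = \<mu> X" if "X \<in> Def I UNIV n" for X
    using \<omega>\<^sub>1 \<omega>\<^sub>2 that unfolding lifts_def pix_def by (simp add: algebra_simps)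
  ultimately show ?thesis
    unfolding lifts_def by blast
qed

lemma amalgam_localize:
  assumes am: "amalgam I A n m lam" and pix: "\<forall>X\<in>Def I A n. pix m lam X = \<mu> X"
    and Y: "Y \<in> Def I A m" "0 < piy n lam Y"
  shows "is_measure I A (n + m) (localize lam (prodset (tuples n) Y))"
    and "\<forall>X\<in>Def I A n. pix m (localize lam (prodset (tuples n) Y)) X = \<mu> X"
proof -
  interpret fa_prob "tuples (n + m)" "Def I A (n + m)" lam
    using am by (simp add: amalgam_def is_measure_iff_fa_prob)
  show "is_measure I A (n + m) (localize lam (prodset (tuples n) Y))"
    using conditional[OF Def_prodset_tuples_left[OF Y(1)]] Y(2)
    by (simp add: is_measure_iff_fa_prob localize_eq piy_def)
  show "\<forall>X\<in>Def I A n. pix m (localize lam (prodset (tuples n) Y)) X = \<mu> X"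
    using amalgam_pix_localize[OF am Y(1)] Y(2) pix by simp
qed

lemma lifts_localize_concentrated:
  assumes lam: "is_measure I A (n + m) lam" and S: "S \<in> Def I A (n + m)"
    and \<omega>: "\<omega> \<in> lifts I A n m \<mu> (localize lam S)" and X: "X \<in> Def I UNIV (n + m)"
  shows "\<omega> (X \<inter> S) = \<omega> X" and "\<omega> (X - S) = 0"
proof -
  interpret lam: fa_prob "tuples (n + m)" "Def I A (n + m)" lam
    using lam by (simp add: is_measure_iff_fa_prob)
  interpret \<omega>: fa_prob "tuples (n + m)" "Def I UNIV (n + m)" \<omega>
    using \<omega> by (simp add: lifts_def is_measure_iff_fa_prob)
  have "S \<in> Def I UNIV (n + m)"
    using S Def_mono[of A UNIV] by blast
  moreover have "\<omega> (tuples (n + m) - S) = 0"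
    using \<omega> S lam.compl_sets[OF S] lam.empty unfolding lifts_def localize_def by auto
  moreover have "X - S = X \<inter> (tuples (n + m) - S)"
    using Def_subset_tuples[OF X] by blast
  ultimately show "\<omega> (X \<inter> S) = \<omega> X" "\<omega> (X - S) = 0"
    using \<omega>.Int_conull \<omega>.Int_null \<omega>.compl_sets X by simp_all
qed

lemma piy_lift_of_localization:
  assumes wit: "E_witness I A n m \<mu> \<nu> lam" and am: "amalgam I A n m lam"
    and \<mu>: "is_measure I UNIV n \<mu>" and \<Phi>: "\<Phi> \<in> Def I A m" "0 < \<nu> \<Phi>" "\<nu> \<Phi> < 1"
    and \<omega>: "\<omega> \<in> lifts I A n m \<mu> (localize lam (prodset (tuples n) \<Phi>))" and Y: "Y \<in> Def I UNIV m"
  shows "piy n \<omega> Y = localize \<nu> \<Phi> Y"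
proof -
  define S where "S = prodset (tuples n) \<Phi>"
  define S' where "S' = tuples (n + m) - S"
  define p where "p = lam S"
  have lam: "is_measure I A (n + m) lam" and pix_lam: "\<forall>X\<in>Def I A n. pix m lam X = \<mu> X"
    using wit unfolding E_witness_iff_lifts by blast+
  interpret lam: fa_prob "tuples (n + m)" "Def I A (n + m)" lam
    using lam by (simp add: is_measure_iff_fa_prob)
  have S_in: "S \<in> Def I A (n + m)"
    unfolding S_def using \<Phi>(1) by (rule Def_prodset_tuples_left)
  have S': "S' = prodset (tuples n) (tuples m - \<Phi>)" "tuples m - \<Phi> \<in> Def I A m"
    unfolding S'_def S_def using algebra.compl_sets[OF Def_algebra \<Phi>(1)]
    by (simp_all add: Diff_prodset_tuples_left)
  have p: "p = \<nu> \<Phi>" "lam S' = 1 - p"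
    using E_witness_piy_eq[OF wit \<mu> \<Phi>(1)] lam.prob_compl[OF S_in] \<Phi>(2,3)
    unfolding p_def S_def S'_def piy_def by simp_all
  obtain R where R: "R \<in> lifts I A n m \<mu> (localize lam S')"
    using lifts_nonempty[OF \<mu> amalgam_localize[OF am pix_lam S'(2)]] p \<Phi>(3)
    unfolding S'(1) piy_def by fastforce
  let ?mix = "\<lambda>W. p * \<omega> W + (1 - p) * R W"
  let ?Y = "prodset (tuples n) Y"
  have "?mix \<in> lifts I A n m \<mu> lam"
    using lifts_mixture[OF lam S_in] \<omega> R p \<Phi>(2,3) unfolding S_def S'_def p_def by simp
  moreover have "\<forall>\<omega>'\<in>lifts I A n m \<mu> lam. \<forall>Y\<in>Def I UNIV m. piy n \<omega>' Y = \<nu> Y"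
    using wit unfolding E_witness_iff_lifts by blast
  moreover have "\<Phi> \<inter> Y \<in> Def I UNIV m"
    using Def_Int[OF _ Y] \<Phi>(1) Def_mono[of A UNIV] by blast
  ultimately have "\<nu> (\<Phi> \<inter> Y) = ?mix (prodset (tuples n) (\<Phi> \<inter> Y))"
    unfolding piy_def by simp
  also have "prodset (tuples n) (\<Phi> \<inter> Y) = ?Y \<inter> S"
    unfolding S_def by (simp add: Int_prodset_tuples_left Int_commute)
  also have "?Y \<inter> S = ?Y - S'"
    using Def_subset_tuples[OF Def_prodset_tuples_left[OF Y]] unfolding S'_def by blast
  also have "?mix (?Y - S') = p * \<omega> ?Y"
    using lifts_localize_concentrated[OF lam S_in \<omega>[folded S_def] Def_prodset_tuples_left[OF Y]]
      lifts_localize_concentrated(2)[OF lam lam.compl_sets[OF S_in] R[unfolded S'_def] Def_prodset_tuples_left[OF Y]]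
      \<open>?Y \<inter> S = ?Y - S'\<close>
    unfolding S'_def by simp
  finally show ?thesis
    using p(1) \<Phi>(2) by (simp add: localize_def piy_def)
qed

theorem proposition3p20:
  fixes I :: "'r \<Rightarrow> 'u list \<Rightarrow> bool"
    and A :: "'u set" and n m :: nat
    and \<mu> \<nu> lam :: "'u list set \<Rightarrow> real" and \<Phi> :: "'u list set"
  assumes "monster I"
    and "small A"
    and "is_measure I UNIV n \<mu>"
    and "is_measure I UNIV m \<nu>"
    and "\<Phi> \<in> Def I A m"
    and "0 < \<nu> \<Phi>" and "\<nu> \<Phi> < 1"
    and "E_witness I A n m \<mu> \<nu> lam"
    and "amalgam I A n m lam"
  shows "E_ge I A n m \<mu> (localize \<nu> \<Phi>)"
proof -
  let ?S = "prodset (tuples n) \<Phi>"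
  have pix_lam: "\<forall>X\<in>Def I A n. pix m lam X = \<mu> X"
    using assms(8) unfolding E_witness_iff_lifts by blast
  have "piy n lam \<Phi> = \<nu> \<Phi>"
    using E_witness_piy_eq assms(3,5,8) by blast
  then have "is_measure I A (n + m) (localize lam ?S)"
    and "\<forall>X\<in>Def I A n. pix m (localize lam ?S) X = \<mu> X"
    using amalgam_localize[OF assms(9) pix_lam assms(5)] assms(6) by simp_all
  moreover have "\<forall>\<omega>\<in>lifts I A n m \<mu> (localize lam ?S). \<forall>Y\<in>Def I UNIV m. piy n \<omega> Y = localize \<nu> \<Phi> Y"
    using piy_lift_of_localization[OF assms(8,9,3,5,6,7)] by blast
  ultimately have "E_witness I A n m \<mu> (localize \<nu> \<Phi>) (localize lam ?S)"
    unfolding E_witness_iff_lifts by blast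
  then show ?thesis
    unfolding E_ge_def by blast
qed

end
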